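(* Under the hypotheses of Theorem 2 (NEAR-DGD$^t$ from a common initial point $s_0$, so $x_{i,0}=y_{i,0}=s_0$; each $f_i$ $\mu_i$-strongly convex with $L_i$-Lipschitz gradient; $0<\alpha\le\min\{1/L,c_4\}$), with $\alpha c_2<1$, $\delta=\frac{c_2}{2(1-\alpha c_2)}$, $c_1=\sqrt{1-\alpha c_2/2}$ and $c_3=\sqrt{\alpha(\alpha+\delta^{-1})}\,DL$, for all $k=0,1,2,\ldots$ and $1\le i\le n$: $$\|x_{i,k}-x^\star\|\le c_1^k\|s_0-x^\star\|+\frac{c_3}{\sqrt{1-c_1^2}}\beta^t+\beta^tD,$$ $$\|y_{i,k}-x^\star\|\le c_1^k\|s_0-x^\star\|+\frac{c_3}{\sqrt{1-c_1^2}}\beta^t+\beta^tD+2D.$$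
   Context: NEAR-DGD$^t$: $\mathbf{x}_k=(\mathbf{W}^t\otimes I_p)\mathbf{y}_k$, $\mathbf{y}_{k+1}=\mathbf{x}_k-\alpha\nabla\mathbf{f}(\mathbf{x}_k)$, $\nabla\mathbf{f}(\mathbf{x})=(\nabla f_1(x_1);\ldots;\nabla f_n(x_n))$, with $\mathbf{W}$ a symmetric doubly-stochastic matrix of a connected network ($w_{ii}>0$, $w_{ij}>0$ iff neighbours), simple eigenvalue $1$, other eigenvalues in $(-1,1)$, $\beta\in(0,1)$ its second largest eigenvalue magnitude. $x^\star$ is the minimizer of $h=\sum_if_i$. $L=\max_iL_i$, $\mu_{\bar f}=\frac1n\sum_i\mu_i$, $L_{\bar f}=\frac1n\sum_iL_i$, $c_2=\frac{2\mu_{\bar f}L_{\bar f}}{\mu_{\bar f}+L_{\bar f}}$, $c_4=\frac{2}{\mu_{\bar f}+L_{\bar f}}$, $D=\|\mathbf{y}_0-\mathbf{u}^\star\|+\frac{\nu+4}{\nu}\|\mathbf{u}^\star\|$, $\mathbf{u}^\star=(\arg\min f_1;\ldots;\arg\min f_n)$, $\nu=2\alpha\min_i\frac{\mu_iL_i}{\mu_i+L_i}$. *)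

theory Defs
  imports "HOL-Analysis.Analysis"
begin

primrec matpow :: "real^'n^'n \<Rightarrow> nat \<Rightarrow> real^'n^'n" where
  "matpow A 0 = mat 1"
| "matpow A (Suc k) = A ** matpow A k"

definition strongly_convex :: "real \<Rightarrow> ('a::real_normed_vector \<Rightarrow> real) \<Rightarrow> bool" where
  "strongly_convex \<mu> f \<longleftrightarrow>
     (\<forall>x y. \<forall>\<theta>::real. 0 \<le> \<theta> \<and> \<theta> \<le> 1 \<longrightarrow>
        f (\<theta> *\<^sub>R x + (1 - \<theta>) *\<^sub>R y)
          \<le> \<theta> * f x + (1 - \<theta>) * f y - \<mu> / 2 * \<theta> * (1 - \<theta>) * (norm (x - y))\<^sup>2)"

definition is_eigenvalue :: "real^'n^'n \<Rightarrow> real \<Rightarrow> bool" where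
  "is_eigenvalue A l \<longleftrightarrow> (\<exists>v. v \<noteq> 0 \<and> A *v v = l *\<^sub>R v)"

text \<open>Second largest eigenvalue magnitude, given that 1 is a simple eigenvalue.\<close>
definition second_eig_mag :: "real^'n^'n \<Rightarrow> real" where
  "second_eig_mag A = Max {\<bar>l\<bar> | l. is_eigenvalue A l \<and> l \<noteq> 1}"

text \<open>NEAR-DGD^t iterates: x_k = (W^t \<otimes> I_p) y_k, y_{k+1} = x_k - alpha grad f(x_k),
  started from y_{i,0} = s0 for every agent i.\<close>
definition near_dgd_iter ::
  "real^'n^'n \<Rightarrow> nat \<Rightarrow> real \<Rightarrow> ('n \<Rightarrow> 'a::real_normed_vector \<Rightarrow> 'a) \<Rightarrow> 'a
   \<Rightarrow> (nat \<Rightarrow> 'n \<Rightarrow> 'a) \<Rightarrow> (nat \<Rightarrow> 'n \<Rightarrow> 'a) \<Rightarrow> bool" where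
  "near_dgd_iter W t \<alpha> g s0 x y \<longleftrightarrow>
     (\<forall>i. y 0 i = s0) \<and>
     (\<forall>k i. x k i = (\<Sum>j\<in>UNIV. (matpow W t) $ i $ j *\<^sub>R y k j)) \<and>
     (\<forall>k i. y (Suc k) i = x k i - \<alpha> *\<^sub>R g i (x k i))"

end

theory Submission
  imports Defs
begin

text \<open>The iterates stay bounded: each local gradient step contracts towards the minimiser \<open>u i\<close>
  of \<open>f i\<close> by the factor \<open>sqrt (1 - \<nu>)\<close> and mixing with the doubly stochastic \<open>W^t\<close> is
  nonexpansive, so the stacked distance of \<open>y k\<close> to \<open>u\<close> never exceeds its initial value plus
  \<open>4 \<parallel>u\<parallel> / \<nu>\<close>, which gives \<open>\<parallel>y k\<parallel> \<le> D\<close>. Since \<open>W^t - J\<close> (with \<open>J\<close> the averaging matrix)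
  has operator norm at most \<open>\<beta>^t\<close>, every \<open>x k i\<close> lies within \<open>\<beta>^t D\<close> of the mean \<open>ybar k\<close>
  of the \<open>y k i\<close>. The mean performs an inexact gradient step on \<open>h / n\<close>, which contracts towards
  \<open>x\<^sup>\<star>\<close> by \<open>sqrt (1 - \<alpha> c2)\<close>, the error from evaluating the gradients at the \<open>x k i\<close> being at
  most \<open>\<alpha> L \<beta>^t D\<close>. A weighted Young inequality turns this into a linear recurrence for
  \<open>\<parallel>ybar k - x\<^sup>\<star>\<parallel>\<^sup>2\<close> with rate \<open>c1\<^sup>2\<close>, and the triangle inequality yields both bounds.\<close>

section \<open>Smooth strongly convex functions\<close>

lemma has_real_derivative_along_line:
  fixes f :: "'a::real_inner \<Rightarrow> real"
  assumes "(f has_derivative (\<lambda>h. g (x + s *\<^sub>R d) \<bullet> h)) (at (x + s *\<^sub>R d))"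
  shows "((\<lambda>s. f (x + s *\<^sub>R d)) has_real_derivative (g (x + s *\<^sub>R d) \<bullet> d)) (at s)"
proof -
  have "((\<lambda>s. x + s *\<^sub>R d) has_derivative (\<lambda>t. t *\<^sub>R d)) (at s)"
    by (auto intro!: derivative_eq_intros)
  from has_derivative_compose[OF this assms]
  have "((\<lambda>s. f (x + s *\<^sub>R d)) has_derivative (\<lambda>t. g (x + s *\<^sub>R d) \<bullet> (t *\<^sub>R d))) (at s)"
    by simp
  moreover have "(\<lambda>t. g (x + s *\<^sub>R d) \<bullet> (t *\<^sub>R d)) = (*) (g (x + s *\<^sub>R d) \<bullet> d)"
    by (auto simp: fun_eq_iff)
  ultimately show ?thesis by (simp add: has_field_derivative_def)
qed

lemma strongly_convex_gradient_lower_bound: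
  fixes f :: "'a::real_inner \<Rightarrow> real"
  assumes sc: "strongly_convex \<mu> f"
    and der: "(f has_derivative (\<lambda>h. g x \<bullet> h)) (at x)"
  shows "f x + g x \<bullet> (y - x) + \<mu> / 2 * (norm (y - x))\<^sup>2 \<le> f y"
proof -
  define d where "d = y - x"
  define q where "q h = f y - f x - \<mu> / 2 * (1 - h) * (norm d)\<^sup>2" for h
  have "((\<lambda>s. f (x + s *\<^sub>R d)) has_real_derivative (g x \<bullet> d)) (at 0)"
    using has_real_derivative_along_line[of f g x 0 d] der by simp
  hence "((\<lambda>h. (f (x + h *\<^sub>R d) - f x) / h) \<longlongrightarrow> g x \<bullet> d) (at 0)"
    by (simp add: DERIV_def)
  hence quot: "((\<lambda>h. (f (x + h *\<^sub>R d) - f x) / h) \<longlongrightarrow> g x \<bullet> d) (at_right 0)"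
    by (auto intro: tendsto_mono[OF at_le])
  have "(q \<longlongrightarrow> q 0) (at_right 0)"
    unfolding q_def by (intro tendsto_intros)
  moreover have "eventually (\<lambda>h. (f (x + h *\<^sub>R d) - f x) / h \<le> q h) (at_right (0::real))"
    unfolding eventually_at_right_field
  proof (intro exI[of _ 1] conjI allI impI)
    fix h :: real assume h: "0 < h" "h < 1"
    have "f (h *\<^sub>R y + (1 - h) *\<^sub>R x) \<le> h * f y + (1 - h) * f x - \<mu> / 2 * h * (1 - h) * (norm (y - x))\<^sup>2"
      using sc h unfolding strongly_convex_def by auto
    moreover have "h *\<^sub>R y + (1 - h) *\<^sub>R x = x + h *\<^sub>R d" by (simp add: d_def algebra_simps)
    ultimately have "f (x + h *\<^sub>R d) - f x \<le> h * q h"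
      by (simp add: q_def d_def algebra_simps)
    thus "(f (x + h *\<^sub>R d) - f x) / h \<le> q h"
      using h by (simp add: divide_le_eq mult.commute)
  qed simp
  ultimately have "g x \<bullet> d \<le> q 0"
    using tendsto_le[OF trivial_limit_at_right_real _ quot] by blast
  thus ?thesis by (simp add: q_def d_def)
qed

lemma lipschitz_gradient_upper_bound:
  fixes f :: "'a::real_inner \<Rightarrow> real"
  assumes der: "\<And>z. (f has_derivative (\<lambda>h. g z \<bullet> h)) (at z)"
    and lip: "lipschitz_on L UNIV g"
  shows "f y \<le> f x + g x \<bullet> (y - x) + L / 2 * (norm (y - x))\<^sup>2"
proof -
  define d where "d = y - x"
  define \<psi> where "\<psi> s = f (x + s *\<^sub>R d) - s * (g x \<bullet> d) - L / 2 * s\<^sup>2 * (norm d)\<^sup>2" for s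
  have "\<psi> 1 \<le> \<psi> 0"
  proof (rule DERIV_nonpos_imp_nonincreasing[of 0 1 \<psi>])
    fix s :: real assume s: "0 \<le> s" "s \<le> 1"
    have "(\<psi> has_real_derivative (g (x + s *\<^sub>R d) \<bullet> d - g x \<bullet> d - L / 2 * (2 * s) * (norm d)\<^sup>2)) (at s)"
      unfolding \<psi>_def using has_real_derivative_along_line[of f g x s d] der
      by (auto intro!: derivative_eq_intros)
    moreover have "g (x + s *\<^sub>R d) \<bullet> d - g x \<bullet> d \<le> L / 2 * (2 * s) * (norm d)\<^sup>2"
    proof -
      have "g (x + s *\<^sub>R d) \<bullet> d - g x \<bullet> d = (g (x + s *\<^sub>R d) - g x) \<bullet> d"
        by (simp add: inner_diff_left)
      also have "\<dots> \<le> norm (g (x + s *\<^sub>R d) - g x) * norm d" by (rule norm_cauchy_schwarz)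
      also have "\<dots> \<le> L * norm (s *\<^sub>R d) * norm d"
        using lipschitz_onD[OF lip, of "x + s *\<^sub>R d" x] by (intro mult_right_mono) (simp_all add: dist_norm)
      also have "\<dots> = L / 2 * (2 * s) * (norm d)\<^sup>2" using s by (simp add: power2_eq_square)
      finally show ?thesis .
    qed
    ultimately show "\<exists>y. (\<psi> has_real_derivative y) (at s) \<and> y \<le> 0" by force
  qed simp
  thus ?thesis by (simp add: \<psi>_def d_def)
qed

lemma gradient_cocoercive:
  fixes h :: "'a::real_inner \<Rightarrow> real"
  assumes low: "\<And>x y. h x + gh x \<bullet> (y - x) \<le> h y"
    and up: "\<And>x y. h y \<le> h x + gh x \<bullet> (y - x) + L / 2 * (norm (y - x))\<^sup>2"
    and s: "0 < s" "s * L \<le> 1"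
  shows "s * (norm (gh x - gh y))\<^sup>2 \<le> (gh x - gh y) \<bullet> (x - y)"
proof -
  define d where "d = gh y - gh x"
  define z1 where "z1 = y - s *\<^sub>R d"
  define z2 where "z2 = x + s *\<^sub>R d"
  \<comment> \<open>Chain the lower bound at \<open>x\<close> with the upper bound at \<open>y\<close> through \<open>z1\<close>, and symmetrically through \<open>z2\<close>.\<close>
  have 1: "h x + gh x \<bullet> (z1 - x) \<le> h z1" by (rule low)
  have 2: "h z1 \<le> h y + gh y \<bullet> (z1 - y) + L / 2 * (norm (z1 - y))\<^sup>2" by (rule up)
  have 3: "h y + gh y \<bullet> (z2 - y) \<le> h z2" by (rule low)
  have 4: "h z2 \<le> h x + gh x \<bullet> (z2 - x) + L / 2 * (norm (z2 - x))\<^sup>2" by (rule up)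
  have "gh x \<bullet> (z1 - x) = gh x \<bullet> (y - x) - s * (gh x \<bullet> d)"
    and "gh y \<bullet> (z1 - y) = - s * (gh y \<bullet> d)"
    and "gh y \<bullet> (z2 - y) = gh y \<bullet> (x - y) + s * (gh y \<bullet> d)"
    and "gh x \<bullet> (z2 - x) = s * (gh x \<bullet> d)"
    and "gh y \<bullet> d - gh x \<bullet> d = (norm d)\<^sup>2"
    and "gh x \<bullet> (y - x) + gh y \<bullet> (x - y) = - ((gh x - gh y) \<bullet> (x - y))"
    by (simp_all add: z1_def z2_def d_def inner_diff_right inner_add_right inner_diff_left
        power2_norm_eq_inner algebra_simps)
  moreover have "(norm (z1 - y))\<^sup>2 = s\<^sup>2 * (norm d)\<^sup>2" and "(norm (z2 - x))\<^sup>2 = s\<^sup>2 * (norm d)\<^sup>2"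
    by (simp_all add: z1_def z2_def power_mult_distrib)
  ultimately have key: "2 * s * (norm d)\<^sup>2 - L * s\<^sup>2 * (norm d)\<^sup>2 \<le> (gh x - gh y) \<bullet> (x - y)"
    using 1 2 3 4 by (simp add: algebra_simps)
  have "L * s\<^sup>2 * (norm d)\<^sup>2 = (s * L) * (s * (norm d)\<^sup>2)" by (simp add: power2_eq_square)
  also have "\<dots> \<le> 1 * (s * (norm d)\<^sup>2)" using s by (intro mult_right_mono) auto
  finally show ?thesis using key by (simp add: d_def norm_minus_commute)
qed

lemma strongly_convex_shifted_gradient_cocoercive:
  fixes f :: "'a::real_inner \<Rightarrow> real" and a b :: 'a
  assumes der: "\<And>z. (f has_derivative (\<lambda>h. g z \<bullet> h)) (at z)"
    and sc: "strongly_convex \<mu> f"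
    and lip: "lipschitz_on L UNIV g"
  defines "d \<equiv> (g a - \<mu> *\<^sub>R a) - (g b - \<mu> *\<^sub>R b)"
  shows "0 \<le> d \<bullet> (a - b) \<and> (norm d)\<^sup>2 \<le> (L - \<mu>) * (d \<bullet> (a - b))"
proof -
  \<comment> \<open>\<open>f - \<mu>/2 \<parallel>\<cdot>\<parallel>\<^sup>2\<close> is convex with \<open>(L - \<mu>)\<close>-Lipschitz gradient \<open>g - \<mu> id\<close>.\<close>
  define h where "h z = f z - \<mu> / 2 * (norm z)\<^sup>2" for z
  define gh where "gh z = g z - \<mu> *\<^sub>R z" for z
  have sq: "\<mu> / 2 * ((norm y)\<^sup>2 - (norm x)\<^sup>2) = \<mu> / 2 * (norm (y - x))\<^sup>2 + \<mu> * (x \<bullet> (y - x))"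
    for x y :: 'a
    by (simp add: power2_norm_eq_inner inner_diff_left inner_diff_right inner_commute algebra_simps)
  have low: "h x + gh x \<bullet> (y - x) \<le> h y" for x y
    using strongly_convex_gradient_lower_bound[OF sc der, where x=x and y=y] sq[of y x]
    by (simp add: h_def gh_def inner_diff_left algebra_simps)
  have up: "h y \<le> h x + gh x \<bullet> (y - x) + (L - \<mu>) / 2 * (norm (y - x))\<^sup>2" for x y
    using lipschitz_gradient_upper_bound[OF der lip, where x=x and y=y] sq[of y x]
    by (simp add: h_def gh_def inner_diff_left algebra_simps diff_divide_distrib)
  define p where "p = d \<bullet> (a - b)"
  define q where "q = (norm d)\<^sup>2"
  have cc: "s * q \<le> p" if "0 < s" "s * (L - \<mu>) \<le> 1" for s
    using gradient_cocoercive[of h gh "L - \<mu>" s a b, OF low up that]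
    by (simp add: q_def p_def d_def gh_def)
  have q0: "0 \<le> q" by (simp add: q_def)
  show ?thesis
  proof (cases "L - \<mu> > 0")
    case True
    have "1 / (L - \<mu>) * q \<le> p" using cc[of "1 / (L - \<mu>)"] True by simp
    hence "q \<le> (L - \<mu>) * p" using True by (simp add: field_simps)
    with q0 have "0 \<le> (L - \<mu>) * p" by linarith
    with True have "0 \<le> p" by (simp add: zero_le_mult_iff)
    with \<open>q \<le> (L - \<mu>) * p\<close> show ?thesis by (simp add: p_def q_def)
  next
    case False
    \<comment> \<open>Then every step size \<open>s > 0\<close> is admissible, which forces \<open>q = 0\<close>.\<close>
    have "q = 0"
    proof (rule ccontr)
      assume "q \<noteq> 0"
      hence qp: "q > 0" using q0 by simp
      have "q \<le> p" using cc[of 1] False by simp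
      moreover have "(2 * p / q) * q \<le> p"
        using qp \<open>q \<le> p\<close> False by (intro cc) (auto intro!: mult_nonneg_nonpos[THEN order_trans])
      ultimately show False using qp by simp
    qed
    thus ?thesis by (simp add: p_def q_def)
  qed
qed

lemma gradient_step_contraction:
  fixes f :: "'a::real_inner \<Rightarrow> real"
  assumes der: "\<And>z. (f has_derivative (\<lambda>h. g z \<bullet> h)) (at z)"
    and sc: "strongly_convex \<mu> f"
    and lip: "lipschitz_on L UNIV g"
    and mu: "0 < \<mu>" and L: "0 < L"
    and \<alpha>: "0 < \<alpha>" "\<alpha> \<le> 2 / (\<mu> + L)"
  shows "(norm ((a - \<alpha> *\<^sub>R g a) - (b - \<alpha> *\<^sub>R g b)))\<^sup>2
         \<le> (1 - 2 * \<alpha> * \<mu> * L / (\<mu> + L)) * (norm (a - b))\<^sup>2"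
proof -
  define d where "d = (g a - \<mu> *\<^sub>R a) - (g b - \<mu> *\<^sub>R b)"
  define p where "p = d \<bullet> (a - b)"
  define q where "q = (norm d)\<^sup>2"
  define R where "R = (norm (a - b))\<^sup>2"
  have pq: "0 \<le> p" "q \<le> (L - \<mu>) * p"
    using strongly_convex_shifted_gradient_cocoercive[OF der sc lip, of a b]
    by (simp_all add: d_def p_def q_def)
  have step: "(a - \<alpha> *\<^sub>R g a) - (b - \<alpha> *\<^sub>R g b) = (1 - \<alpha> * \<mu>) *\<^sub>R (a - b) - \<alpha> *\<^sub>R d"
    by (simp add: d_def algebra_simps)
  have "(norm ((a - \<alpha> *\<^sub>R g a) - (b - \<alpha> *\<^sub>R g b)))\<^sup>2
         = (1 - \<alpha> * \<mu>)\<^sup>2 * R - 2 * \<alpha> * (1 - \<alpha> * \<mu>) * p + \<alpha>\<^sup>2 * q"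
    unfolding step power2_norm_eq_inner R_def q_def p_def
    by (simp add: inner_diff_left inner_diff_right inner_commute algebra_simps power2_eq_square)
  also have "\<dots> \<le> (1 - \<alpha> * \<mu>)\<^sup>2 * R + \<alpha> * p * (\<alpha> * (L + \<mu>) - 2)"
  proof -
    have "\<alpha>\<^sup>2 * q \<le> \<alpha>\<^sup>2 * ((L - \<mu>) * p)" using pq by (intro mult_left_mono) auto
    thus ?thesis by (simp add: algebra_simps power2_eq_square)
  qed
  also have "\<dots> \<le> (1 - \<alpha> * \<mu>)\<^sup>2 * R"
  proof -
    have "\<alpha> * (L + \<mu>) \<le> 2" using \<alpha> mu L by (simp add: field_simps)
    thus ?thesis using pq \<alpha> by (simp add: mult_nonneg_nonpos)
  qed
  also have "\<dots> \<le> (1 - 2 * \<alpha> * \<mu> * L / (\<mu> + L)) * R"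
  proof (rule mult_right_mono)
    have "\<alpha> * (\<mu> + L) \<le> 2" using \<alpha> mu L by (simp add: field_simps)
    hence "0 \<le> \<alpha> * \<mu>\<^sup>2 * (2 - \<alpha> * (\<mu> + L)) / (\<mu> + L)" using \<alpha> mu L by simp
    moreover have "(1 - 2 * \<alpha> * \<mu> * L / (\<mu> + L)) - (1 - \<alpha> * \<mu>)\<^sup>2
        = \<alpha> * \<mu>\<^sup>2 * (2 - \<alpha> * (\<mu> + L)) / (\<mu> + L)"
      using mu L by (simp add: field_simps power2_eq_square)
    ultimately show "(1 - \<alpha> * \<mu>)\<^sup>2 \<le> 1 - 2 * \<alpha> * \<mu> * L / (\<mu> + L)" by linarith
  qed (simp add: R_def)
  finally show ?thesis by (simp add: R_def)
qed

lemma gradient_eq_0_at_minimum: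
  fixes f :: "'a::real_inner \<Rightarrow> real"
  assumes der: "\<And>z. (f has_derivative (\<lambda>h. g z \<bullet> h)) (at z)"
    and lip: "lipschitz_on L UNIV g" and L: "0 < L"
    and min: "\<And>z. f x \<le> f z"
  shows "g x = 0"
proof -
  let ?z = "x - (1 / L) *\<^sub>R g x"
  have "f x \<le> f ?z" by (rule min)
  also have "f ?z \<le> f x + g x \<bullet> (?z - x) + L / 2 * (norm (?z - x))\<^sup>2"
    by (rule lipschitz_gradient_upper_bound[OF der lip])
  also have "\<dots> = f x - (norm (g x))\<^sup>2 / (2 * L)"
    using L by (simp add: power_mult_distrib field_simps power2_eq_square dot_square_norm)
  finally show ?thesis using L by (simp add: divide_le_0_iff)
qed

lemma strong_convexity_le_lipschitz:
  fixes f :: "'a::euclidean_space \<Rightarrow> real"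
  assumes der: "\<And>z. (f has_derivative (\<lambda>h. g z \<bullet> h)) (at z)"
    and sc: "strongly_convex \<mu> f"
    and lip: "lipschitz_on L UNIV g"
  shows "\<mu> \<le> L"
proof -
  obtain b :: 'a where b: "norm b = 1" using nonempty_Basis norm_Basis by blast
  have "f 0 + g 0 \<bullet> (b - 0) + \<mu> / 2 * (norm (b - 0))\<^sup>2 \<le> f b"
    and "f b + g b \<bullet> (0 - b) + \<mu> / 2 * (norm (0 - b))\<^sup>2 \<le> f 0"
    by (intro strongly_convex_gradient_lower_bound[OF sc der])+
  with b have "\<mu> \<le> (g b - g 0) \<bullet> b" by (simp add: inner_diff_left)
  also have "\<dots> \<le> norm (g b - g 0) * norm b" by (rule norm_cauchy_schwarz)
  also have "\<dots> \<le> L" using lipschitz_onD[OF lip, of b 0] b by (simp add: dist_norm)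
  finally show ?thesis .
qed

lemma strongly_convex_sum:
  fixes f :: "'i \<Rightarrow> 'a::real_normed_vector \<Rightarrow> real"
  assumes "finite I" "\<And>i. i \<in> I \<Longrightarrow> strongly_convex (\<mu> i) (f i)"
  shows "strongly_convex (\<Sum>i\<in>I. \<mu> i) (\<lambda>z. \<Sum>i\<in>I. f i z)"
  unfolding strongly_convex_def
proof (intro allI impI)
  fix a b :: 'a and \<theta> :: real assume \<theta>: "0 \<le> \<theta> \<and> \<theta> \<le> 1"
  have "(\<Sum>i\<in>I. f i (\<theta> *\<^sub>R a + (1 - \<theta>) *\<^sub>R b))
      \<le> (\<Sum>i\<in>I. \<theta> * f i a + (1 - \<theta>) * f i b - \<mu> i / 2 * \<theta> * (1 - \<theta>) * (norm (a - b))\<^sup>2)"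
    using assms(2) \<theta> unfolding strongly_convex_def by (intro sum_mono) auto
  also have "\<dots> = \<theta> * (\<Sum>i\<in>I. f i a) + (1 - \<theta>) * (\<Sum>i\<in>I. f i b)
                 - (\<Sum>i\<in>I. \<mu> i) / 2 * \<theta> * (1 - \<theta>) * (norm (a - b))\<^sup>2"
    by (simp add: sum.distrib sum_subtractf sum_distrib_left sum_distrib_right sum_divide_distrib)
  finally show "(\<Sum>i\<in>I. f i (\<theta> *\<^sub>R a + (1 - \<theta>) *\<^sub>R b)) \<le> \<theta> * (\<Sum>i\<in>I. f i a)
      + (1 - \<theta>) * (\<Sum>i\<in>I. f i b) - (\<Sum>i\<in>I. \<mu> i) / 2 * \<theta> * (1 - \<theta>) * (norm (a - b))\<^sup>2" .
qed

lemma strongly_convex_scale: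
  fixes f :: "'a::real_normed_vector \<Rightarrow> real"
  assumes "0 \<le> c" "strongly_convex \<mu> f"
  shows "strongly_convex (c * \<mu>) (\<lambda>z. c * f z)"
  unfolding strongly_convex_def
proof (intro allI impI)
  fix a b :: 'a and \<theta> :: real assume \<theta>: "0 \<le> \<theta> \<and> \<theta> \<le> 1"
  have "c * f (\<theta> *\<^sub>R a + (1 - \<theta>) *\<^sub>R b)
      \<le> c * (\<theta> * f a + (1 - \<theta>) * f b - \<mu> / 2 * \<theta> * (1 - \<theta>) * (norm (a - b))\<^sup>2)"
    using assms \<theta> unfolding strongly_convex_def by (intro mult_left_mono) auto
  thus "c * f (\<theta> *\<^sub>R a + (1 - \<theta>) *\<^sub>R b)
      \<le> \<theta> * (c * f a) + (1 - \<theta>) * (c * f b) - c * \<mu> / 2 * \<theta> * (1 - \<theta>) * (norm (a - b))\<^sup>2"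
    by (simp add: algebra_simps)
qed

lemma lipschitz_on_sum:
  fixes g :: "'i \<Rightarrow> 'a::metric_space \<Rightarrow> 'b::real_normed_vector"
  assumes "finite I" "\<And>i. i \<in> I \<Longrightarrow> lipschitz_on (L i) U (g i)"
  shows "lipschitz_on (\<Sum>i\<in>I. L i) U (\<lambda>z. \<Sum>i\<in>I. g i z)"
  using assms by (induction I rule: finite_induct) (auto intro: lipschitz_intros)

section \<open>Doubly stochastic matrices\<close>

definition doubly_stochastic :: "real^'n^'n \<Rightarrow> bool" where
  "doubly_stochastic A \<longleftrightarrow> (\<forall>i j. 0 \<le> A $ i $ j)
     \<and> (\<forall>i. (\<Sum>j\<in>UNIV. A $ i $ j) = 1) \<and> (\<forall>j. (\<Sum>i\<in>UNIV. A $ i $ j) = 1)"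

lemma doubly_stochastic_mat_1: "doubly_stochastic (mat 1 :: real^'n^'n)"
  by (simp add: doubly_stochastic_def mat_def if_distrib)

lemma doubly_stochastic_mult:
  assumes A: "doubly_stochastic A" and B: "doubly_stochastic B"
  shows "doubly_stochastic (A ** B)"
proof -
  have e: "(A ** B) $ i $ j = (\<Sum>k\<in>UNIV. A $ i $ k * B $ k $ j)" for i j
    by (simp add: matrix_matrix_mult_def)
  have "(\<Sum>j\<in>UNIV. (A ** B) $ i $ j) = (\<Sum>k\<in>UNIV. A $ i $ k * (\<Sum>j\<in>UNIV. B $ k $ j))" for i
    unfolding e sum_distrib_left by (rule sum.swap)
  moreover have "(\<Sum>i\<in>UNIV. (A ** B) $ i $ j) = (\<Sum>k\<in>UNIV. (\<Sum>i\<in>UNIV. A $ i $ k) * B $ k $ j)" for j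
    unfolding e sum_distrib_right by (rule sum.swap)
  ultimately show ?thesis
    using A B unfolding doubly_stochastic_def e by (auto intro: sum_nonneg)
qed

lemma doubly_stochastic_matpow: "doubly_stochastic W \<Longrightarrow> doubly_stochastic (matpow W t)"
  by (induction t) (simp_all add: doubly_stochastic_mat_1 doubly_stochastic_mult)

definition averaging_matrix :: "real^'n::finite^'n" where
  "averaging_matrix = (\<chi> i j. 1 / real CARD('n))"

lemma doubly_stochastic_averaging_matrix: "doubly_stochastic averaging_matrix"
  by (simp add: doubly_stochastic_def averaging_matrix_def)

lemma averaging_matrix_mult:
  fixes A :: "real^'n::finite^'n"
  assumes "doubly_stochastic A"
  shows "averaging_matrix ** A = averaging_matrix" and "A ** averaging_matrix = averaging_matrix"
proof -
  have "(averaging_matrix ** A) $ i $ j = (\<Sum>k\<in>UNIV. A $ k $ j) / real CARD('n)"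
    and "(A ** averaging_matrix) $ i $ j = (\<Sum>k\<in>UNIV. A $ i $ k) / real CARD('n)" for i j
    by (simp_all add: averaging_matrix_def matrix_matrix_mult_def sum_divide_distrib)
  with assms show "averaging_matrix ** A = averaging_matrix" "A ** averaging_matrix = averaging_matrix"
    by (simp_all add: doubly_stochastic_def averaging_matrix_def vec_eq_iff)
qed

lemma averaging_matrix_mult_vector:
  "(averaging_matrix *v (v :: real^'n::finite)) $ i = (\<Sum>j\<in>UNIV. v $ j) / real CARD('n)"
  by (simp add: averaging_matrix_def matrix_vector_mult_def sum_divide_distrib)

lemma norm_mat_1_minus_averaging_matrix_le:
  "norm ((mat 1 - averaging_matrix) *v (v :: real^'n::finite)) \<le> norm v"
proof -
  define n where "n = real CARD('n)"
  define c where "c = (\<Sum>i\<in>UNIV. v $ i) / n"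
  define one :: "real^'n" where "one = (\<chi> i. 1)"
  have n: "n > 0" by (simp add: n_def)
  have "(mat 1 - averaging_matrix) *v v = v - c *\<^sub>R one"
    by (simp add: matrix_vector_mult_diff_rdistrib averaging_matrix_mult_vector vec_eq_iff one_def c_def n_def)
  moreover have "(norm (v - c *\<^sub>R one))\<^sup>2 = (norm v)\<^sup>2 - n * c\<^sup>2"
  proof -
    have "v \<bullet> one = n * c" "(norm one)\<^sup>2 = n"
      using n by (simp_all add: one_def inner_vec_def c_def n_def power2_norm_eq_inner)
    with dot_norm_neg[of v "c *\<^sub>R one"] show ?thesis
      by (simp add: power_mult_distrib power2_eq_square algebra_simps)
  qed
  ultimately have "(norm ((mat 1 - averaging_matrix) *v v))\<^sup>2 \<le> (norm v)\<^sup>2"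
    using n by simp
  thus ?thesis by (rule power2_le_imp_le) simp
qed

section \<open>Spectral bounds for symmetric matrices\<close>

lemma symmetric_matrix_inner:
  fixes M :: "real^'n^'n"
  assumes "transpose M = M"
  shows "(M *v a) \<bullet> b = a \<bullet> (M *v b)"
  by (metis assms dot_lmul_matrix vector_transpose_matrix)

lemma symmetric_matrix_eigenvectors_orthogonal:
  fixes W :: "real^'n^'n"
  assumes "transpose W = W" "W *v a = l1 *\<^sub>R a" "W *v b = l2 *\<^sub>R b" "l1 \<noteq> l2"
  shows "a \<bullet> b = 0"
proof -
  have "l1 * (a \<bullet> b) = (W *v a) \<bullet> b" using assms by simp
  also have "\<dots> = a \<bullet> (W *v b)" by (rule symmetric_matrix_inner[OF assms(1)])
  also have "\<dots> = l2 * (a \<bullet> b)" using assms by simp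
  finally show ?thesis using assms(4) by simp
qed

lemma symmetric_matrix_finite_eigenvalues:
  fixes W :: "real^'n^'n"
  assumes sym: "transpose W = W"
  shows "finite {l. is_eigenvalue W l}"
proof (rule ccontr)
  assume "infinite {l. is_eigenvalue W l}"
  then obtain T where T: "finite T" "card T = CARD('n) + 1" "T \<subseteq> {l. is_eigenvalue W l}"
    using infinite_arbitrarily_large by blast
  then have "\<forall>l\<in>T. \<exists>v. v \<noteq> 0 \<and> W *v v = l *\<^sub>R v" by (auto simp: is_eigenvalue_def)
  then obtain ev where ev: "\<And>l. l \<in> T \<Longrightarrow> ev l \<noteq> 0 \<and> W *v ev l = l *\<^sub>R ev l"
    by metis
  have orth: "ev l1 \<bullet> ev l2 = 0" if "l1 \<in> T" "l2 \<in> T" "l1 \<noteq> l2" for l1 l2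
    using symmetric_matrix_eigenvectors_orthogonal[OF sym] ev that by blast
  have "inj_on ev T"
    by (rule inj_onI) (metis ev inner_eq_zero_iff orth)
  moreover have "independent (ev ` T)"
    by (rule pairwise_orthogonal_independent)
      (use orth ev in \<open>auto simp: pairwise_def orthogonal_def\<close>)
  ultimately have "card T \<le> DIM(real^'n)"
    using independent_bound[of "ev ` T"] card_image[of ev T] by simp
  thus False using T by simp
qed

lemma linear_plus_quadratic_nonpos_imp_zero:
  fixes a b :: real
  assumes "\<And>t. a * t + b * t\<^sup>2 \<le> 0"
  shows "a = 0"
proof (rule ccontr)
  assume a: "a \<noteq> 0"
  define c where "c = \<bar>b\<bar> + 1"
  have c: "c > 0" "2 * c + b > 0" by (auto simp: c_def)
  have "a * (a / (2 * c)) + b * (a / (2 * c))\<^sup>2 = a\<^sup>2 * (2 * c + b) / (4 * c\<^sup>2)"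
    using c by (simp add: field_simps power2_eq_square)
  moreover have "a\<^sup>2 * (2 * c + b) / (4 * c\<^sup>2) > 0" using a c by simp
  ultimately show False using assms[of "a / (2 * c)"] by simp
qed

lemma symmetric_matrix_maximizer_eigenvector:
  fixes M :: "real^'n^'n"
  assumes sym: "transpose M = M"
    and bnd: "\<And>v. norm (M *v v) \<le> \<sigma> * norm v" and \<sigma>: "0 \<le> \<sigma>"
    and v0: "norm v0 = 1" "norm (M *v v0) = \<sigma>"
  shows "M *v (M *v v0) = \<sigma>\<^sup>2 *\<^sub>R v0"
proof -
  have sq: "(M *v v) \<bullet> (M *v v) \<le> \<sigma>\<^sup>2 * (v \<bullet> v)" for v
    using power_mono[OF bnd[of v], of 2] \<sigma>
    by (simp add: power2_norm_eq_inner[symmetric] power_mult_distrib)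
  have s0: "(M *v v0) \<bullet> (M *v v0) = \<sigma>\<^sup>2" "v0 \<bullet> v0 = 1"
    using v0 by (simp_all add: power2_norm_eq_inner[symmetric])
  \<comment> \<open>\<open>v0\<close> maximises the quadratic form \<open>\<parallel>M v\<parallel>\<^sup>2 - \<sigma>\<^sup>2\<parallel>v\<parallel>\<^sup>2 \<le> 0\<close>, so its first variation vanishes.\<close>
  have "(M *v v0) \<bullet> (M *v w) = \<sigma>\<^sup>2 * (v0 \<bullet> w)" for w
  proof -
    have "(2 * ((M *v v0) \<bullet> (M *v w) - \<sigma>\<^sup>2 * (v0 \<bullet> w))) * t
          + ((M *v w) \<bullet> (M *v w) - \<sigma>\<^sup>2 * (w \<bullet> w)) * t\<^sup>2 \<le> 0" for t
      using sq[of "v0 + t *\<^sub>R w"] s0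
      by (simp add: matrix_vector_right_distrib matrix_vector_mult_scaleR
          inner_add_left inner_add_right inner_commute algebra_simps power2_eq_square)
    thus ?thesis using linear_plus_quadratic_nonpos_imp_zero by fastforce
  qed
  hence "(M *v (M *v v0) - \<sigma>\<^sup>2 *\<^sub>R v0) \<bullet> w = 0" for w
    using symmetric_matrix_inner[OF sym, of "M *v v0" w] by (simp add: inner_diff_left)
  from this[of "M *v (M *v v0) - \<sigma>\<^sup>2 *\<^sub>R v0"] show ?thesis by simp
qed

lemma symmetric_matrix_norm_bound_eigenvalue:
  fixes M :: "real^'n^'n"
  assumes sym: "transpose M = M"
  obtains \<sigma> where "0 \<le> \<sigma>" "\<And>v. norm (M *v v) \<le> \<sigma> * norm v"
    "\<sigma> = 0 \<or> (\<exists>z l. z \<noteq> 0 \<and> M *v z = l *\<^sub>R z \<and> \<bar>l\<bar> = \<sigma>)"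
proof -
  have "\<exists>x\<in>sphere 0 1. \<forall>y\<in>sphere 0 1. norm (M *v y) \<le> norm (M *v x)"
    by (rule continuous_attains_sup) (auto intro!: continuous_intros)
  then obtain v0 where v0: "norm v0 = 1"
    and max: "\<And>y. norm y = 1 \<Longrightarrow> norm (M *v y) \<le> norm (M *v v0)"
    by auto
  define \<sigma> where "\<sigma> = norm (M *v v0)"
  have \<sigma>: "0 \<le> \<sigma>" by (simp add: \<sigma>_def)
  have bnd: "norm (M *v v) \<le> \<sigma> * norm v" for v
  proof (cases "v = 0")
    case False
    have "norm (M *v ((1 / norm v) *\<^sub>R v)) \<le> \<sigma>"
      using max[of "(1 / norm v) *\<^sub>R v"] False by (simp add: \<sigma>_def)
    thus ?thesis using False by (simp add: matrix_vector_mult_scaleR field_simps)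
  qed simp
  have MM: "M *v (M *v v0) = \<sigma>\<^sup>2 *\<^sub>R v0"
    using symmetric_matrix_maximizer_eigenvector[OF sym bnd \<sigma> v0] by (simp add: \<sigma>_def)
  \<comment> \<open>\<open>(M - \<sigma>)(M + \<sigma>) v0 = 0\<close>: either \<open>(M + \<sigma>) v0\<close> is an eigenvector for \<open>\<sigma>\<close>, or \<open>v0\<close> is one for \<open>-\<sigma>\<close>.\<close>
  have "\<sigma> = 0 \<or> (\<exists>z l. z \<noteq> 0 \<and> M *v z = l *\<^sub>R z \<and> \<bar>l\<bar> = \<sigma>)"
  proof (cases "M *v v0 + \<sigma> *\<^sub>R v0 = 0")
    case True
    hence "M *v v0 = (- \<sigma>) *\<^sub>R v0" by (simp add: eq_neg_iff_add_eq_0)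
    moreover have "v0 \<noteq> 0" using v0 by auto
    moreover have "\<bar>- \<sigma>\<bar> = \<sigma>" using \<sigma> by simp
    ultimately show ?thesis by blast
  next
    case False
    have "M *v (M *v v0 + \<sigma> *\<^sub>R v0) = \<sigma> *\<^sub>R (M *v v0 + \<sigma> *\<^sub>R v0)"
      by (simp add: matrix_vector_right_distrib matrix_vector_mult_scaleR MM power2_eq_square algebra_simps)
    with False show ?thesis by (intro disjI2 exI[of _ "M *v v0 + \<sigma> *\<^sub>R v0"] exI[of _ \<sigma>]) (simp add: \<sigma>)
  qed
  then show ?thesis by (rule that[OF \<sigma> bnd])
qed

lemma abs_eigenvalue_le_second_eig_mag:
  fixes W :: "real^'n^'n"
  assumes "transpose W = W" "is_eigenvalue W l" "l \<noteq> 1"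
  shows "\<bar>l\<bar> \<le> second_eig_mag W"
proof -
  have "{\<bar>l\<bar> | l. is_eigenvalue W l \<and> l \<noteq> 1} \<subseteq> abs ` {l. is_eigenvalue W l}" by auto
  hence fin: "finite {\<bar>l\<bar> | l. is_eigenvalue W l \<and> l \<noteq> 1}"
    using symmetric_matrix_finite_eigenvalues[OF assms(1)] finite_subset by blast
  show ?thesis unfolding second_eig_mag_def using assms(2,3) by (intro Max_ge[OF fin]) auto
qed

lemma doubly_stochastic_mult_ones:
  fixes W :: "real^'n::finite^'n"
  assumes "doubly_stochastic W"
  shows "W *v 1 = 1"
  using assms by (simp add: doubly_stochastic_def matrix_vector_mult_def vec_eq_iff)

lemma orthogonal_eigenvector_eigenvalue_ne_1:
  fixes W :: "real^'n::finite^'n"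
  assumes eig1: "dim {v. W *v v = v} = 1" and W1: "W *v 1 = 1"
    and z: "z \<noteq> 0" "W *v z = l *\<^sub>R z" "1 \<bullet> z = 0"
  shows "l \<noteq> 1"
proof
  assume "l = 1"
  hence sub: "{1, z} \<subseteq> {v. W *v v = v}" using W1 z by auto
  have "independent {1, z}"
    by (rule pairwise_orthogonal_independent)
      (use z in \<open>auto simp: pairwise_def orthogonal_def inner_commute\<close>)
  hence "card {1, z} \<le> 1" using independent_card_le_dim[OF sub] eig1 by simp
  moreover have "(1 :: real^'n) \<noteq> z" using z by auto
  ultimately show False by simp
qed

lemma norm_minus_averaging_matrix_le:
  fixes W :: "real^'n::finite^'n"
  assumes sym: "transpose W = W" and ds: "doubly_stochastic W"
    and eig1: "dim {v. W *v v = v} = 1" and \<beta>: "0 < second_eig_mag W"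
  shows "norm ((W - averaging_matrix) *v v) \<le> second_eig_mag W * norm v"
proof -
  define M where "M = W - averaging_matrix"
  have symM: "transpose M = M"
    using sym unfolding M_def averaging_matrix_def by (simp add: vec_eq_iff transpose_def)
  obtain \<sigma> where \<sigma>: "0 \<le> \<sigma>" "\<And>v. norm (M *v v) \<le> \<sigma> * norm v"
    and eig: "\<sigma> = 0 \<or> (\<exists>z l. z \<noteq> 0 \<and> M *v z = l *\<^sub>R z \<and> \<bar>l\<bar> = \<sigma>)"
    using symmetric_matrix_norm_bound_eigenvalue[OF symM] by blast
  have "\<sigma> \<le> second_eig_mag W"
  proof (cases "\<sigma> = 0")
    case False
    then obtain z l where zl: "z \<noteq> 0" "M *v z = l *\<^sub>R z" "\<bar>l\<bar> = \<sigma>" "l \<noteq> 0"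
      using eig by auto
    have W1: "W *v 1 = 1" by (rule doubly_stochastic_mult_ones[OF ds])
    have "M *v 1 = 0"
      by (simp add: M_def matrix_vector_mult_diff_rdistrib W1 averaging_matrix_mult_vector vec_eq_iff)
    \<comment> \<open>\<open>M\<close> is symmetric and kills \<open>1\<close>, so its eigenvectors for \<open>l \<noteq> 0\<close> are orthogonal to \<open>1\<close>,
      hence killed by the averaging matrix and eigenvectors of \<open>W\<close> as well.\<close>
    hence "l * (1 \<bullet> z) = 0"
      using symmetric_matrix_inner[OF symM, of 1 z] zl by simp
    hence z1: "1 \<bullet> z = 0" using zl by simp
    hence "averaging_matrix *v z = 0"
      by (simp add: averaging_matrix_mult_vector vec_eq_iff inner_vec_def)
    hence Wz: "W *v z = l *\<^sub>R z"
      using zl by (simp add: M_def matrix_vector_mult_diff_rdistrib)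
    have "is_eigenvalue W l" using Wz zl unfolding is_eigenvalue_def by blast
    moreover have "l \<noteq> 1" by (rule orthogonal_eigenvector_eigenvalue_ne_1[OF eig1 W1 zl(1) Wz z1])
    ultimately show ?thesis using abs_eigenvalue_le_second_eig_mag[OF sym] zl by fastforce
  qed (use \<beta> in simp)
  hence "\<sigma> * norm v \<le> second_eig_mag W * norm v" by (intro mult_right_mono) auto
  with \<sigma>(2)[of v] show ?thesis unfolding M_def by linarith
qed

lemma matrix_diff_mult_distrib:
  fixes A B C :: "real^'n^'n"
  shows "(A - B) ** C = A ** C - B ** C" and "A ** (B - C) = A ** B - A ** C"
  by (simp_all add: matrix_matrix_mult_def vec_eq_iff sum_subtractf left_diff_distrib right_diff_distrib)

lemma norm_matpow_minus_averaging_matrix_le: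
  fixes W :: "real^'n::finite^'n"
  assumes sym: "transpose W = W" and ds: "doubly_stochastic W"
    and eig1: "dim {v. W *v v = v} = 1" and \<beta>: "0 < second_eig_mag W"
  shows "norm ((matpow W t - averaging_matrix) *v v) \<le> second_eig_mag W ^ t * norm v"
proof (induction t arbitrary: v)
  case 0
  show ?case using norm_mat_1_minus_averaging_matrix_le by simp
next
  case (Suc t)
  let ?J = "averaging_matrix :: real^'n^'n"
  have dsJ: "doubly_stochastic (matpow W t)" by (rule doubly_stochastic_matpow[OF ds])
  have "(W - ?J) ** (matpow W t - ?J) = matpow W (Suc t) - ?J"
    using averaging_matrix_mult[OF ds] averaging_matrix_mult[OF dsJ]
      averaging_matrix_mult[OF doubly_stochastic_averaging_matrix]
    by (simp add: matrix_diff_mult_distrib)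
  hence "(matpow W (Suc t) - ?J) *v v = (W - ?J) *v ((matpow W t - ?J) *v v)"
    by (simp add: matrix_vector_mul_assoc)
  also have "norm \<dots> \<le> second_eig_mag W * norm ((matpow W t - ?J) *v v)"
    by (rule norm_minus_averaging_matrix_le[OF sym ds eig1 \<beta>])
  also have "\<dots> \<le> second_eig_mag W * (second_eig_mag W ^ t * norm v)"
    using Suc \<beta> by (intro mult_left_mono) auto
  finally show ?case by simp
qed

section \<open>Stacked vectors\<close>

text \<open>A stacked vector \<open>v :: 'n \<Rightarrow> 'a\<close> collects one point per agent; \<open>mix A v\<close> is \<open>(A \<otimes> I) v\<close>.\<close>

definition mix :: "real^'n::finite^'n \<Rightarrow> ('n \<Rightarrow> 'a::real_vector) \<Rightarrow> 'n \<Rightarrow> 'a" where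
  "mix A v i = (\<Sum>j\<in>UNIV. A $ i $ j *\<^sub>R v j)"

definition stack_norm :: "('n::finite \<Rightarrow> 'a::real_normed_vector) \<Rightarrow> real" where
  "stack_norm v = L2_set (\<lambda>i. norm (v i)) UNIV"

definition mean :: "('n::finite \<Rightarrow> 'a::real_vector) \<Rightarrow> 'a" where
  "mean v = (\<Sum>i\<in>UNIV. v i) /\<^sub>R real CARD('n)"

lemma stack_norm_nonneg [simp]: "0 \<le> stack_norm v"
  by (simp add: stack_norm_def)

lemma power2_stack_norm: "(stack_norm v)\<^sup>2 = (\<Sum>i\<in>UNIV. (norm (v i))\<^sup>2)"
  unfolding stack_norm_def L2_set_def by (simp add: sum_nonneg)

lemma stack_norm_add_le: "stack_norm (\<lambda>i. v i + w i) \<le> stack_norm v + stack_norm w"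
proof -
  have "stack_norm (\<lambda>i. v i + w i) \<le> L2_set (\<lambda>i. norm (v i) + norm (w i)) UNIV"
    unfolding stack_norm_def by (rule L2_set_mono) (auto intro: norm_triangle_ineq)
  also have "\<dots> \<le> stack_norm v + stack_norm w"
    unfolding stack_norm_def by (rule L2_set_triangle_ineq)
  finally show ?thesis .
qed

lemma stack_norm_diff_le: "stack_norm (\<lambda>i. v i - w i) \<le> stack_norm v + stack_norm w"
  using stack_norm_add_le[of v "\<lambda>i. - w i"] by (simp add: stack_norm_def)

lemma norm_le_stack_norm: "norm (v i) \<le> stack_norm v"
proof (rule power2_le_imp_le)
  show "(norm (v i))\<^sup>2 \<le> (stack_norm v)\<^sup>2"
    unfolding power2_stack_norm by (rule member_le_sum) auto
qed simp

lemma stack_norm_le_scaled: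
  assumes "0 \<le> c" "(\<Sum>i\<in>UNIV. (norm (v i))\<^sup>2) \<le> c\<^sup>2 * (\<Sum>i\<in>UNIV. (norm (w i))\<^sup>2)"
  shows "stack_norm v \<le> c * stack_norm w"
  by (rule power2_le_imp_le) (use assms in \<open>simp_all add: power_mult_distrib power2_stack_norm\<close>)

text \<open>Coordinatewise in a basis of \<open>'a\<close>, \<open>mix P\<close> is \<open>dim 'a\<close> copies of \<open>P *v _\<close>.\<close>

lemma stack_norm_mix_le:
  fixes P :: "real^'n::finite^'n" and v :: "'n \<Rightarrow> 'a::euclidean_space"
  assumes P: "\<And>w. norm (P *v w) \<le> c * norm w" and c: "0 \<le> c"
  shows "stack_norm (mix P v) \<le> c * stack_norm v"
proof (rule stack_norm_le_scaled[OF c])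
  define vb where "vb b = (\<chi> j. v j \<bullet> b)" for b
  have norm_sq: "(norm w)\<^sup>2 = (\<Sum>b\<in>Basis. (w \<bullet> b)\<^sup>2)" for w :: 'a
    unfolding power2_norm_eq_inner by (subst euclidean_inner) (simp add: power2_eq_square)
  have vec_sq: "(norm w)\<^sup>2 = (\<Sum>i\<in>UNIV. (w $ i)\<^sup>2)" for w :: "real^'n"
    unfolding power2_norm_eq_inner by (simp add: inner_vec_def power2_eq_square)
  have "mix P v i \<bullet> b = (P *v vb b) $ i" for i b
    by (simp add: mix_def inner_sum_left matrix_vector_mult_def vb_def)
  hence "(\<Sum>i\<in>UNIV. (norm (mix P v i))\<^sup>2) = (\<Sum>b\<in>Basis. (norm (P *v vb b))\<^sup>2)"
    by (simp add: norm_sq vec_sq sum.swap[of _ UNIV])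
  also have "\<dots> \<le> (\<Sum>b\<in>(Basis::'a set). c\<^sup>2 * (norm (vb b))\<^sup>2)"
  proof (rule sum_mono)
    fix b :: 'a
    have "(norm (P *v vb b))\<^sup>2 \<le> (c * norm (vb b))\<^sup>2" using P c by (intro power_mono) auto
    thus "(norm (P *v vb b))\<^sup>2 \<le> c\<^sup>2 * (norm (vb b))\<^sup>2" by (simp add: power_mult_distrib)
  qed
  also have "\<dots> = c\<^sup>2 * (\<Sum>i\<in>UNIV. (norm (v i))\<^sup>2)"
    by (simp add: sum_distrib_left norm_sq vec_sq vb_def sum.swap[of _ Basis])
  finally show "(\<Sum>i\<in>UNIV. (norm (mix P v i))\<^sup>2) \<le> c\<^sup>2 * (\<Sum>i\<in>UNIV. (norm (v i))\<^sup>2)" .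
qed

lemma power2_convex_combination_le:
  fixes a w :: "'i \<Rightarrow> real"
  assumes "\<And>j. j \<in> I \<Longrightarrow> 0 \<le> a j" "(\<Sum>j\<in>I. a j) = 1"
  shows "(\<Sum>j\<in>I. a j * w j)\<^sup>2 \<le> (\<Sum>j\<in>I. a j * (w j)\<^sup>2)"
proof -
  define m where "m = (\<Sum>j\<in>I. a j * w j)"
  have "0 \<le> (\<Sum>j\<in>I. a j * (w j - m)\<^sup>2)" using assms by (intro sum_nonneg) auto
  also have "\<dots> = (\<Sum>j\<in>I. a j * (w j)\<^sup>2) - 2 * m * (\<Sum>j\<in>I. a j * w j) + m\<^sup>2 * (\<Sum>j\<in>I. a j)"
    by (simp add: power2_diff algebra_simps sum.distrib sum_subtractf sum_distrib_left sum_distrib_right)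
  also have "\<dots> = (\<Sum>j\<in>I. a j * (w j)\<^sup>2) - m\<^sup>2"
    using assms by (simp add: m_def power2_eq_square)
  finally show ?thesis by (simp add: m_def)
qed

lemma stack_norm_mix_doubly_stochastic_le:
  assumes "doubly_stochastic A"
  shows "stack_norm (mix A v) \<le> stack_norm v"
proof -
  have A: "\<And>i j. 0 \<le> A $ i $ j" "\<And>i. (\<Sum>j\<in>UNIV. A $ i $ j) = 1" "\<And>j. (\<Sum>i\<in>UNIV. A $ i $ j) = 1"
    using assms by (simp_all add: doubly_stochastic_def)
  have "(norm (mix A v i))\<^sup>2 \<le> (\<Sum>j\<in>UNIV. A $ i $ j * (norm (v j))\<^sup>2)" for i
  proof -
    have "norm (mix A v i) \<le> (\<Sum>j\<in>UNIV. A $ i $ j * norm (v j))"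
      unfolding mix_def using norm_sum A(1) by (metis (no_types, lifting) norm_scaleR abs_of_nonneg sum.cong)
    hence "(norm (mix A v i))\<^sup>2 \<le> (\<Sum>j\<in>UNIV. A $ i $ j * norm (v j))\<^sup>2"
      by (intro power_mono) auto
    also have "\<dots> \<le> (\<Sum>j\<in>UNIV. A $ i $ j * (norm (v j))\<^sup>2)"
      using A by (intro power2_convex_combination_le) auto
    finally show ?thesis .
  qed
  hence "(\<Sum>i\<in>UNIV. (norm (mix A v i))\<^sup>2) \<le> (\<Sum>i\<in>UNIV. \<Sum>j\<in>UNIV. A $ i $ j * (norm (v j))\<^sup>2)"
    by (intro sum_mono)
  also have "\<dots> = (\<Sum>j\<in>UNIV. (norm (v j))\<^sup>2)"
    using A(3) by (simp add: sum.swap[of _ UNIV] flip: sum_distrib_right)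
  finally show ?thesis by (intro stack_norm_le_scaled[where c=1, simplified]) simp
qed

lemma mean_real: "mean h = (\<Sum>i\<in>UNIV. h i) / real CARD('n)"
  for h :: "'n::finite \<Rightarrow> real"
  by (simp add: mean_def divide_inverse mult.commute)

lemma mean_const [simp]: "mean (\<lambda>i. c) = c"
  by (simp add: mean_def sum_constant_scaleR)

lemma mean_scaleR: "mean (\<lambda>i. c *\<^sub>R v i) = c *\<^sub>R mean v"
  by (simp add: mean_def scaleR_sum_right mult.commute)

lemma norm_mean_le:
  fixes v :: "'n::finite \<Rightarrow> 'a::real_normed_vector"
  assumes "\<And>i. norm (v i) \<le> B"
  shows "norm (mean v) \<le> B"
proof -
  have "norm (mean v) = norm (\<Sum>j\<in>UNIV. v j) / real CARD('n)"
    by (simp add: mean_def divide_inverse mult.commute)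
  also have "\<dots> \<le> (\<Sum>j\<in>UNIV. norm (v j)) / real CARD('n)"
    by (intro divide_right_mono norm_sum) simp
  also have "\<dots> \<le> (\<Sum>j\<in>(UNIV::'n set). B) / real CARD('n)"
    by (intro divide_right_mono sum_mono assms) simp
  finally show ?thesis by simp
qed

lemma mean_diff: "mean (\<lambda>i. v i - w i) = mean v - mean w"
  by (simp add: mean_def sum_subtractf scaleR_diff_right)

lemma norm_mean_le_stack_norm: "norm (mean v) \<le> stack_norm v"
  by (intro norm_mean_le norm_le_stack_norm)

lemma mean_mix:
  assumes "doubly_stochastic A"
  shows "mean (mix A v) = mean v"
proof -
  have "(\<Sum>i\<in>UNIV. mix A v i) = (\<Sum>j\<in>UNIV. (\<Sum>i\<in>UNIV. A $ i $ j) *\<^sub>R v j)"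
    unfolding mix_def scaleR_sum_left by (rule sum.swap)
  thus ?thesis using assms by (simp add: mean_def doubly_stochastic_def)
qed

lemma mix_averaging_matrix: "mix averaging_matrix v i = mean v"
  by (simp add: mix_def mean_def averaging_matrix_def scaleR_sum_right inverse_eq_divide)

lemma mix_diff_matrix: "mix (A - B) v i = mix A v i - mix B v i"
  by (simp add: mix_def scaleR_diff_left sum_subtractf)

lemma mix_diff: "mix A (\<lambda>j. v j - w j) i = mix A v i - mix A w i"
  by (simp add: mix_def scaleR_diff_right sum_subtractf)

section \<open>Scalar inequalities\<close>

lemma power2_add_le_weighted:
  fixes p q e :: real
  assumes "0 < e"
  shows "(p + q)\<^sup>2 \<le> (1 + e) * p\<^sup>2 + (1 + 1 / e) * q\<^sup>2"
proof -
  have "0 \<le> (e * p - q)\<^sup>2 / e" using assms by simp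
  also have "\<dots> = e * p\<^sup>2 + q\<^sup>2 / e - 2 * (p * q)"
    using assms by (simp add: power2_diff field_simps power2_eq_square)
  finally show ?thesis by (simp add: power2_sum algebra_simps)
qed

lemma affine_recurrence_le:
  fixes s :: "nat \<Rightarrow> real"
  assumes "0 \<le> a" "a < 1" "0 \<le> C" "\<And>k. s (Suc k) \<le> a * s k + C"
  shows "s k \<le> a ^ k * s 0 + C / (1 - a)"
proof (induction k)
  case (Suc k)
  have "s (Suc k) \<le> a * (a ^ k * s 0 + C / (1 - a)) + C"
    using assms(4)[of k] mult_left_mono[OF Suc assms(1)] by linarith
  also have "\<dots> = a ^ Suc k * s 0 + C / (1 - a)"
    using assms(2) by (simp add: field_simps)
  finally show ?case .
qed (use assms in simp)

lemma sqrt_one_minus_le: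
  assumes "\<nu> \<le> 1"
  shows "sqrt (1 - \<nu>) \<le> 1 - \<nu> / 2"
proof -
  have "1 - \<nu> \<le> (1 - \<nu> / 2)\<^sup>2" by (simp add: power2_eq_square algebra_simps)
  with assms show ?thesis by (intro real_le_lsqrt) simp_all
qed

section \<open>NEAR-DGD\<close>

locale near_dgd =
  fixes W :: "real^'n::finite^'n"
    and f :: "'n \<Rightarrow> 'a::euclidean_space \<Rightarrow> real" and g :: "'n \<Rightarrow> 'a \<Rightarrow> 'a"
    and \<mu> Lc :: "'n \<Rightarrow> real" and t :: nat and \<alpha> :: real
    and s0 xstar :: 'a and u :: "'n \<Rightarrow> 'a" and x y :: "nat \<Rightarrow> 'n \<Rightarrow> 'a"
  assumes W_sym: "transpose W = W"
    and W_doubly_stochastic: "doubly_stochastic W"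
    and W_eig1: "dim {v. W *v v = v} = 1"
    and beta_pos: "0 < second_eig_mag W"
    and mu_pos: "\<And>i. 0 < \<mu> i" and Lc_pos: "\<And>i. 0 < Lc i"
    and grad: "\<And>i z. (f i has_derivative (\<lambda>h. g i z \<bullet> h)) (at z)"
    and sconv: "\<And>i. strongly_convex (\<mu> i) (f i)"
    and lipg: "\<And>i. lipschitz_on (Lc i) UNIV (g i)"
    and xstar_min: "\<And>z. (\<Sum>i\<in>UNIV. f i xstar) \<le> (\<Sum>i\<in>UNIV. f i z)"
    and u_min: "\<And>i z. f i (u i) \<le> f i z"
    and iter: "near_dgd_iter W t \<alpha> g s0 x y"
    and alpha_pos: "0 < \<alpha>"
    and alpha_le: "\<alpha> \<le> 1 / Max (range Lc)"
    and alpha_c2: "\<alpha> * (2 * mean \<mu> * mean Lc / (mean \<mu> + mean Lc)) < 1"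
begin

abbreviation \<beta> :: real where "\<beta> \<equiv> second_eig_mag W"

definition L :: real where "L = Max (range Lc)"
definition c2 :: real where "c2 = 2 * mean \<mu> * mean Lc / (mean \<mu> + mean Lc)"
definition \<nu> :: real where "\<nu> = 2 * \<alpha> * Min (range (\<lambda>i. \<mu> i * Lc i / (\<mu> i + Lc i)))"
definition D :: real where "D = stack_norm (\<lambda>i. s0 - u i) + (\<nu> + 4) / \<nu> * stack_norm u"
definition \<delta> :: real where "\<delta> = c2 / (2 * (1 - \<alpha> * c2))"
definition c1 :: real where "c1 = sqrt (1 - \<alpha> * c2 / 2)"
definition c3 :: real where "c3 = sqrt (\<alpha> * (\<alpha> + 1 / \<delta>)) * D * L"

lemma y_0: "y 0 i = s0"
  and x_eq_mix: "x k = mix (matpow W t) (y k)"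
  and y_Suc: "y (Suc k) i = x k i - \<alpha> *\<^sub>R g i (x k i)"
  using iter by (auto simp: near_dgd_iter_def mix_def)

lemma mixing_doubly_stochastic: "doubly_stochastic (matpow W t)"
  by (rule doubly_stochastic_matpow[OF W_doubly_stochastic])

lemma Lc_le_L: "Lc i \<le> L"
  unfolding L_def by (intro Max_ge) auto

lemma L_pos: "0 < L"
  using Lc_le_L Lc_pos by (meson less_le_trans)

lemma alpha_Lc_le_1: "\<alpha> * Lc i \<le> 1"
proof -
  have "\<alpha> * Lc i \<le> \<alpha> * L" using Lc_le_L alpha_pos by (simp add: mult_left_mono)
  also have "\<dots> \<le> 1" using alpha_le L_pos by (simp add: L_def field_simps)
  finally show ?thesis .
qed

lemma mu_le_Lc: "\<mu> i \<le> Lc i"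
  by (rule strong_convexity_le_lipschitz[OF grad sconv lipg])

lemma g_u: "g i (u i) = 0"
  by (rule gradient_eq_0_at_minimum[OF grad lipg Lc_pos u_min])

lemma nu_le: "\<nu> \<le> 2 * \<alpha> * \<mu> i * Lc i / (\<mu> i + Lc i)"
proof -
  have "Min (range (\<lambda>i. \<mu> i * Lc i / (\<mu> i + Lc i))) \<le> \<mu> i * Lc i / (\<mu> i + Lc i)"
    by (intro Min_le) auto
  hence "2 * \<alpha> * Min (range (\<lambda>i. \<mu> i * Lc i / (\<mu> i + Lc i))) \<le> 2 * \<alpha> * (\<mu> i * Lc i / (\<mu> i + Lc i))"
    using alpha_pos by (intro mult_left_mono) auto
  thus ?thesis by (simp add: \<nu>_def)
qed

lemma nu_pos: "0 < \<nu>"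
proof -
  have "0 < Min (range (\<lambda>i. \<mu> i * Lc i / (\<mu> i + Lc i)))"
    using mu_pos Lc_pos by (subst Min_gr_iff) (auto intro!: divide_pos_pos mult_pos_pos add_pos_pos)
  with alpha_pos show ?thesis by (simp add: \<nu>_def)
qed

lemma nu_le_1: "\<nu> \<le> 1"
proof -
  fix i
  have "2 * \<alpha> * \<mu> i * Lc i / (\<mu> i + Lc i) = 2 * \<mu> i * (\<alpha> * Lc i) / (\<mu> i + Lc i)" by simp
  also have "\<dots> \<le> 2 * \<mu> i / (\<mu> i + Lc i)"
    using alpha_Lc_le_1[of i] mu_pos[of i] Lc_pos[of i]
    by (intro divide_right_mono) (auto simp: mult_left_le)
  also have "\<dots> \<le> 1" using mu_le_Lc[of i] mu_pos[of i] by (simp add: field_simps)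
  finally show ?thesis using nu_le[of i] by simp
qed

lemma local_step_contraction:
  "norm ((a - \<alpha> *\<^sub>R g i a) - (b - \<alpha> *\<^sub>R g i b)) \<le> sqrt (1 - \<nu>) * norm (a - b)"
proof (rule power2_le_imp_le)
  have "\<alpha> * \<mu> i \<le> \<alpha> * Lc i" using mu_le_Lc[of i] alpha_pos by (simp add: mult_left_mono)
  hence "\<alpha> * (\<mu> i + Lc i) \<le> 2" using alpha_Lc_le_1[of i] by (simp add: algebra_simps)
  hence "\<alpha> \<le> 2 / (\<mu> i + Lc i)" using mu_pos[of i] Lc_pos[of i] by (simp add: field_simps)
  hence "(norm ((a - \<alpha> *\<^sub>R g i a) - (b - \<alpha> *\<^sub>R g i b)))\<^sup>2
      \<le> (1 - 2 * \<alpha> * \<mu> i * Lc i / (\<mu> i + Lc i)) * (norm (a - b))\<^sup>2"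
    by (intro gradient_step_contraction[OF grad sconv lipg mu_pos Lc_pos alpha_pos])
  also have "\<dots> \<le> (1 - \<nu>) * (norm (a - b))\<^sup>2"
    using nu_le[of i] by (intro mult_right_mono) auto
  finally show "(norm ((a - \<alpha> *\<^sub>R g i a) - (b - \<alpha> *\<^sub>R g i b)))\<^sup>2 \<le> (sqrt (1 - \<nu>) * norm (a - b))\<^sup>2"
    using nu_le_1 by (simp add: power_mult_distrib)
qed (use nu_le_1 in simp)

text \<open>Each \<open>u i\<close> is a fixed point of the local gradient step, which contracts by \<open>sqrt (1 - \<nu>)\<close>,
  while mixing is nonexpansive on stacked vectors.\<close>

lemma stack_dist_to_u_step:
  "stack_norm (\<lambda>i. y (Suc k) i - u i) \<le> sqrt (1 - \<nu>) * (stack_norm (\<lambda>i. y k i - u i) + 2 * stack_norm u)"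
proof -
  let ?A = "matpow W t"
  have "(\<Sum>i\<in>UNIV. (norm (y (Suc k) i - u i))\<^sup>2) \<le> (sqrt (1 - \<nu>))\<^sup>2 * (\<Sum>i\<in>UNIV. (norm (x k i - u i))\<^sup>2)"
  proof -
    have "norm (y (Suc k) i - u i) \<le> sqrt (1 - \<nu>) * norm (x k i - u i)" for i
      using local_step_contraction[of "x k i" i "u i"] by (simp add: y_Suc g_u)
    hence "(norm (y (Suc k) i - u i))\<^sup>2 \<le> (sqrt (1 - \<nu>))\<^sup>2 * (norm (x k i - u i))\<^sup>2" for i
      by (simp add: power_mono flip: power_mult_distrib)
    thus ?thesis by (simp add: sum_distrib_left sum_mono)
  qed
  hence "stack_norm (\<lambda>i. y (Suc k) i - u i) \<le> sqrt (1 - \<nu>) * stack_norm (\<lambda>i. x k i - u i)"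
    using nu_le_1 by (intro stack_norm_le_scaled) simp_all
  also have "stack_norm (\<lambda>i. x k i - u i) \<le> stack_norm (\<lambda>i. y k i - u i) + 2 * stack_norm u"
  proof -
    have "(\<lambda>i. x k i - u i) = (\<lambda>i. mix ?A (\<lambda>j. y k j - u j) i + (mix ?A u i - u i))"
      by (simp add: x_eq_mix mix_diff fun_eq_iff)
    hence "stack_norm (\<lambda>i. x k i - u i)
        \<le> stack_norm (mix ?A (\<lambda>j. y k j - u j)) + stack_norm (\<lambda>i. mix ?A u i - u i)"
      by (simp add: stack_norm_add_le)
    moreover have "stack_norm (mix ?A (\<lambda>j. y k j - u j)) \<le> stack_norm (\<lambda>i. y k i - u i)"
      and "stack_norm (mix ?A u) \<le> stack_norm u"
      by (intro stack_norm_mix_doubly_stochastic_le[OF mixing_doubly_stochastic])+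
    ultimately show ?thesis using stack_norm_diff_le[of "mix ?A u" u] by simp
  qed
  hence "sqrt (1 - \<nu>) * stack_norm (\<lambda>i. x k i - u i)
      \<le> sqrt (1 - \<nu>) * (stack_norm (\<lambda>i. y k i - u i) + 2 * stack_norm u)"
    using nu_le_1 by (intro mult_left_mono) auto
  finally show ?thesis .
qed

lemma stack_norm_y_le_D: "stack_norm (y k) \<le> D"
proof -
  define q where "q = sqrt (1 - \<nu>)"
  define U where "U = stack_norm u"
  define Y where "Y k = stack_norm (\<lambda>i. y k i - u i)" for k
  have q: "0 \<le> q" "q \<le> 1 - \<nu> / 2" "q < 1"
    using nu_pos nu_le_1 sqrt_one_minus_le[OF nu_le_1] by (auto simp: q_def)
  have U: "0 \<le> U" by (simp add: U_def)
  have "Y k \<le> q ^ k * Y 0 + 2 * q * U / (1 - q)"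
    using stack_dist_to_u_step q U unfolding Y_def q_def U_def
    by (intro affine_recurrence_le) (auto simp: algebra_simps)
  also have "q ^ k * Y 0 \<le> Y 0"
    using q by (intro mult_left_le_one_le) (auto simp: Y_def power_le_one)
  also have "2 * q * U / (1 - q) \<le> 4 * U / \<nu>"
  proof -
    have "2 * U * (q * \<nu>) \<le> 2 * U * \<nu>"
      using q U nu_pos by (intro mult_left_mono mult_left_le_one_le) auto
    also have "\<dots> \<le> 2 * U * (2 * (1 - q))"
      using q U by (intro mult_left_mono) auto
    finally have "2 * q * U * \<nu> \<le> 4 * U * (1 - q)" by (simp add: algebra_simps)
    thus ?thesis using q nu_pos by (simp add: divide_simps)
  qed
  finally have "Y k \<le> Y 0 + 4 * U / \<nu>" by simp
  moreover have "stack_norm (y k) \<le> Y k + U"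
    using stack_norm_add_le[of "\<lambda>i. y k i - u i" u] by (simp add: Y_def U_def)
  moreover have "Y 0 + 4 * U / \<nu> + U = D"
    using nu_pos by (simp add: D_def Y_def U_def y_0 field_simps)
  ultimately show ?thesis by linarith
qed

lemma D_nonneg: "0 \<le> D"
  using stack_norm_y_le_D[of 0] stack_norm_nonneg order_trans by blast

lemma consensus_error_le: "norm (x k i - mean (y k)) \<le> \<beta> ^ t * D"
proof -
  have "x k i - mean (y k) = mix (matpow W t - averaging_matrix) (y k) i"
    by (simp add: x_eq_mix mix_diff_matrix mix_averaging_matrix)
  also have "norm \<dots> \<le> stack_norm (mix (matpow W t - averaging_matrix) (y k))"
    by (rule norm_le_stack_norm)
  also have "\<dots> \<le> \<beta> ^ t * stack_norm (y k)"
    using norm_matpow_minus_averaging_matrix_le[OF W_sym W_doubly_stochastic W_eig1 beta_pos] beta_pos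
    by (intro stack_norm_mix_le) auto
  also have "\<dots> \<le> \<beta> ^ t * D"
    using stack_norm_y_le_D beta_pos by (intro mult_left_mono) auto
  finally show ?thesis .
qed

lemma mean_has_derivative:
  "((\<lambda>z. mean (\<lambda>i. f i z)) has_derivative (\<lambda>h. mean (\<lambda>i. g i z) \<bullet> h)) (at z)"
proof -
  have "((\<lambda>z. inverse (real CARD('n)) * (\<Sum>i\<in>UNIV. f i z))
      has_derivative (\<lambda>h. inverse (real CARD('n)) * (\<Sum>i\<in>UNIV. g i z \<bullet> h))) (at z)"
    by (intro has_derivative_mult_right has_derivative_sum grad)
  thus ?thesis by (simp add: mean_def inner_sum_left)
qed

lemma mean_strongly_convex: "strongly_convex (mean \<mu>) (\<lambda>z. mean (\<lambda>i. f i z))"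
proof -
  have "strongly_convex (\<Sum>i\<in>UNIV. \<mu> i) (\<lambda>z. \<Sum>i\<in>UNIV. f i z)"
    by (rule strongly_convex_sum) (simp_all add: sconv)
  from strongly_convex_scale[OF _ this, of "inverse (real CARD('n))"] show ?thesis
    by (simp add: mean_def)
qed

lemma mean_gradient_lipschitz: "lipschitz_on (mean Lc) UNIV (\<lambda>z. mean (\<lambda>i. g i z))"
proof -
  have "lipschitz_on (\<Sum>i\<in>UNIV. Lc i) UNIV (\<lambda>z. \<Sum>i\<in>UNIV. g i z)"
    by (rule lipschitz_on_sum) (simp_all add: lipg)
  from lipschitz_on_cmult_nonneg[OF this, of "inverse (real CARD('n))"] show ?thesis
    by (simp add: mean_def)
qed

lemma mean_pos: "0 < mean \<mu>" "0 < mean Lc"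
  using mu_pos Lc_pos by (simp_all add: mean_real sum_pos)

lemma mean_gradient_xstar: "mean (\<lambda>i. g i xstar) = 0"
proof (rule gradient_eq_0_at_minimum[OF mean_has_derivative mean_gradient_lipschitz mean_pos(2)])
  show "mean (\<lambda>i. f i xstar) \<le> mean (\<lambda>i. f i z)" for z
    using xstar_min by (simp add: mean_real divide_right_mono)
qed

lemma alpha_c2_lt_1: "\<alpha> * c2 < 1"
  using alpha_c2 by (simp add: c2_def)

lemma mean_step_contraction:
  "norm ((a - \<alpha> *\<^sub>R mean (\<lambda>i. g i a)) - (b - \<alpha> *\<^sub>R mean (\<lambda>i. g i b)))
     \<le> sqrt (1 - \<alpha> * c2) * norm (a - b)"
proof (rule power2_le_imp_le)
  have "mean \<mu> \<le> mean Lc"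
    using mu_le_Lc by (simp add: mean_real divide_right_mono sum_mono)
  moreover have "mean Lc \<le> L"
    using sum_bounded_above[of UNIV Lc L] Lc_le_L by (simp add: mean_real pos_divide_le_eq mult.commute)
  ultimately have "mean \<mu> + mean Lc \<le> 2 * L" by linarith
  hence "\<alpha> * (mean \<mu> + mean Lc) \<le> 2 * (\<alpha> * L)"
    using mult_left_mono[of _ _ \<alpha>] alpha_pos by force
  also have "\<alpha> * L \<le> 1" using alpha_le L_pos by (simp add: L_def field_simps)
  finally have "\<alpha> \<le> 2 / (mean \<mu> + mean Lc)" using mean_pos by (simp add: field_simps)
  moreover have "2 * \<alpha> * mean \<mu> * mean Lc / (mean \<mu> + mean Lc) = \<alpha> * c2"
    by (simp add: c2_def ac_simps)
  ultimately have "(norm ((a - \<alpha> *\<^sub>R mean (\<lambda>i. g i a)) - (b - \<alpha> *\<^sub>R mean (\<lambda>i. g i b))))\<^sup>2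
      \<le> (1 - \<alpha> * c2) * (norm (a - b))\<^sup>2"
    using gradient_step_contraction[OF mean_has_derivative mean_strongly_convex
        mean_gradient_lipschitz mean_pos alpha_pos] by metis
  thus "(norm ((a - \<alpha> *\<^sub>R mean (\<lambda>i. g i a)) - (b - \<alpha> *\<^sub>R mean (\<lambda>i. g i b))))\<^sup>2
      \<le> (sqrt (1 - \<alpha> * c2) * norm (a - b))\<^sup>2"
    using alpha_c2_lt_1 by (simp add: power_mult_distrib)
qed (use alpha_c2_lt_1 in simp)

text \<open>The mean of the \<open>y\<close>-iterates performs an inexact gradient step on \<open>h / n\<close>, the gradients
  being evaluated at the \<open>x k i\<close>, which are \<open>\<beta>^t D\<close>-close to the mean.\<close>

lemma mean_error_step:
  "norm (mean (y (Suc k)) - xstar)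
     \<le> sqrt (1 - \<alpha> * c2) * norm (mean (y k) - xstar) + \<alpha> * (L * (\<beta> ^ t * D))"
proof -
  let ?G = "\<lambda>z. mean (\<lambda>i. g i z)"
  let ?ybar = "mean (y k)"
  have "y (Suc k) = (\<lambda>i. x k i - \<alpha> *\<^sub>R g i (x k i))" by (simp add: y_Suc fun_eq_iff)
  hence "mean (y (Suc k)) = ?ybar - \<alpha> *\<^sub>R mean (\<lambda>i. g i (x k i))"
    using mean_mix[OF mixing_doubly_stochastic, of "y k"] by (simp add: mean_diff mean_scaleR x_eq_mix)
  hence "mean (y (Suc k)) - xstar
      = ((?ybar - \<alpha> *\<^sub>R ?G ?ybar) - (xstar - \<alpha> *\<^sub>R ?G xstar))
        - \<alpha> *\<^sub>R mean (\<lambda>i. g i (x k i) - g i ?ybar)"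
    by (simp add: mean_diff mean_gradient_xstar algebra_simps)
  also have "norm \<dots> \<le> sqrt (1 - \<alpha> * c2) * norm (?ybar - xstar) + \<alpha> * (L * (\<beta> ^ t * D))"
  proof (rule order_trans[OF norm_triangle_ineq4 add_mono[OF mean_step_contraction]])
    have "norm (g i (x k i) - g i ?ybar) \<le> L * (\<beta> ^ t * D)" for i
    proof -
      have "norm (g i (x k i) - g i ?ybar) \<le> Lc i * norm (x k i - ?ybar)"
        using lipschitz_onD[OF lipg, of "x k i" ?ybar i] by (simp add: dist_norm)
      also have "\<dots> \<le> L * (\<beta> ^ t * D)"
        using Lc_le_L Lc_pos L_pos consensus_error_le by (intro mult_mono) (auto intro: less_imp_le)
      finally show ?thesis .
    qed
    thus "norm (\<alpha> *\<^sub>R mean (\<lambda>i. g i (x k i) - g i ?ybar)) \<le> \<alpha> * (L * (\<beta> ^ t * D))"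
      using alpha_pos by (simp add: mult_left_mono norm_mean_le)
  qed
  finally show ?thesis .
qed

lemma c2_pos: "0 < c2"
  using mean_pos by (simp add: c2_def)

lemma delta_pos: "0 < \<delta>"
  using alpha_c2_lt_1 c2_pos by (simp add: \<delta>_def)

lemma c1_sq: "c1\<^sup>2 = (1 + \<alpha> * \<delta>) * (1 - \<alpha> * c2)" "1 - c1\<^sup>2 = \<alpha> * c2 / 2"
  using alpha_c2_lt_1 by (simp_all add: c1_def \<delta>_def field_simps)

lemma c3_sq: "(1 + 1 / (\<alpha> * \<delta>)) * (\<alpha> * (L * (\<beta> ^ t * D)))\<^sup>2 = (c3 * \<beta> ^ t)\<^sup>2"
proof -
  have "(1 + 1 / (\<alpha> * \<delta>)) * \<alpha>\<^sup>2 = \<alpha> * (\<alpha> + 1 / \<delta>)"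
    using alpha_pos delta_pos by (simp add: field_simps power2_eq_square)
  moreover have "c3\<^sup>2 = \<alpha> * (\<alpha> + 1 / \<delta>) * D\<^sup>2 * L\<^sup>2"
    using alpha_pos delta_pos by (simp add: c3_def power_mult_distrib)
  ultimately show ?thesis by (simp add: power_mult_distrib)
qed

lemma c1_nonneg: "0 \<le> c1"
  using alpha_c2_lt_1 by (simp add: c1_def)

lemma c3_nonneg: "0 \<le> c3"
  using D_nonneg L_pos alpha_pos delta_pos by (simp add: c3_def)

lemma mean_y_0: "mean (y 0) = s0"
proof -
  have "y 0 = (\<lambda>i. s0)" by (simp add: y_0 fun_eq_iff)
  thus ?thesis by simp
qed

lemma mean_error_le:
  "norm (mean (y k) - xstar) \<le> c1 ^ k * norm (s0 - xstar) + c3 / sqrt (1 - c1\<^sup>2) * \<beta> ^ t"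
proof -
  define e where "e k = norm (mean (y k) - xstar)" for k
  define C where "C = (c3 * \<beta> ^ t)\<^sup>2"
  have pos: "0 < \<alpha> * \<delta>" "0 < 1 - c1\<^sup>2"
    using alpha_pos delta_pos c2_pos by (simp_all add: c1_sq(2))
  \<comment> \<open>Squaring with the weights \<open>1 + \<alpha>\<delta>\<close>, \<open>1 + 1/(\<alpha>\<delta>)\<close> turns the step into a linear recurrence for \<open>e\<^sup>2\<close>.\<close>
  have "(e (Suc k))\<^sup>2 \<le> c1\<^sup>2 * (e k)\<^sup>2 + C" for k
  proof -
    have "(e (Suc k))\<^sup>2 \<le> (sqrt (1 - \<alpha> * c2) * e k + \<alpha> * (L * (\<beta> ^ t * D)))\<^sup>2"
      using mean_error_step[of k] by (intro power_mono) (simp_all add: e_def)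
    also have "\<dots> \<le> (1 + \<alpha> * \<delta>) * (sqrt (1 - \<alpha> * c2) * e k)\<^sup>2
        + (1 + 1 / (\<alpha> * \<delta>)) * (\<alpha> * (L * (\<beta> ^ t * D)))\<^sup>2"
      by (rule power2_add_le_weighted[OF pos(1)])
    also have "\<dots> = c1\<^sup>2 * (e k)\<^sup>2 + C"
      unfolding C_def c3_sq[symmetric] using alpha_c2_lt_1 by (simp add: c1_sq(1) power_mult_distrib)
    finally show ?thesis .
  qed
  hence "(e k)\<^sup>2 \<le> (c1\<^sup>2) ^ k * (e 0)\<^sup>2 + C / (1 - c1\<^sup>2)"
    using pos by (intro affine_recurrence_le) (simp_all add: C_def)
  hence "e k \<le> sqrt ((c1 ^ k * e 0)\<^sup>2 + C / (1 - c1\<^sup>2))"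
    by (intro real_le_rsqrt) (simp add: power_mult_distrib mult.commute flip: power_mult)
  also have "\<dots> \<le> sqrt ((c1 ^ k * e 0)\<^sup>2) + sqrt (C / (1 - c1\<^sup>2))"
    using pos by (intro sqrt_add_le_add_sqrt) (simp_all add: C_def)
  also have "\<dots> = c1 ^ k * norm (s0 - xstar) + c3 / sqrt (1 - c1\<^sup>2) * \<beta> ^ t"
    using c1_nonneg c3_nonneg beta_pos
    by (simp add: e_def mean_y_0 C_def real_sqrt_divide abs_mult)
  finally show ?thesis by (simp add: e_def)
qed

lemma x_error_le:
  "norm (x k i - xstar) \<le> c1 ^ k * norm (s0 - xstar) + c3 / sqrt (1 - c1\<^sup>2) * \<beta> ^ t + \<beta> ^ t * D"
  using norm_triangle_ineq[of "x k i - mean (y k)" "mean (y k) - xstar"]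
    consensus_error_le[of k i] mean_error_le[of k]
  by simp

lemma y_error_le:
  "norm (y k i - xstar) \<le> c1 ^ k * norm (s0 - xstar) + c3 / sqrt (1 - c1\<^sup>2) * \<beta> ^ t + \<beta> ^ t * D + 2 * D"
proof -
  have "norm (y k i - mean (y k)) \<le> 2 * D"
    using norm_triangle_ineq4[of "y k i" "mean (y k)"] norm_le_stack_norm[of "y k" i]
      norm_mean_le_stack_norm[of "y k"] stack_norm_y_le_D[of k]
    by simp
  moreover have "0 \<le> \<beta> ^ t * D" using beta_pos D_nonneg by simp
  ultimately show ?thesis
    using norm_triangle_ineq[of "y k i - mean (y k)" "mean (y k) - xstar"] mean_error_le[of k]
    by simp
qed

end

theorem corollary2:
  fixes W :: "real^'n::finite^'n"
    and E :: "'n \<Rightarrow> 'n \<Rightarrow> bool"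
    and f :: "'n \<Rightarrow> 'a::euclidean_space \<Rightarrow> real"
    and g :: "'n \<Rightarrow> 'a \<Rightarrow> 'a"
    and \<mu> Lc :: "'n \<Rightarrow> real"
    and t :: nat and \<alpha> :: real
    and s0 xstar :: 'a and u :: "'n \<Rightarrow> 'a"
    and x y :: "nat \<Rightarrow> 'n \<Rightarrow> 'a"
  assumes W_sym: "transpose W = W"
    and W_nonneg: "\<forall>i j. 0 \<le> W $ i $ j"
    and W_rows: "\<forall>i. (\<Sum>j\<in>UNIV. W $ i $ j) = 1"
    and W_cols: "\<forall>j. (\<Sum>i\<in>UNIV. W $ i $ j) = 1"
    and W_diag: "\<forall>i. 0 < W $ i $ i"
    and E_sym: "\<forall>i j. E i j \<longleftrightarrow> E j i"
    and E_irrefl: "\<forall>i. \<not> E i i"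
    and E_conn: "\<forall>i j. E\<^sup>*\<^sup>* i j"
    and W_edges: "\<forall>i j. i \<noteq> j \<longrightarrow> (0 < W $ i $ j \<longleftrightarrow> E i j)"
    and W_eig1: "dim {v. W *v v = v} = 1"
    and W_eigs: "\<forall>l. is_eigenvalue W l \<and> l \<noteq> 1 \<longrightarrow> -1 < l \<and> l < 1"
    and beta_pos: "0 < second_eig_mag W"
    and mu_pos: "\<forall>i. 0 < \<mu> i"
    and L_pos: "\<forall>i. 0 < Lc i"
    and grad: "\<forall>i z. (f i has_derivative (\<lambda>h. g i z \<bullet> h)) (at z)"
    and sconv: "\<forall>i. strongly_convex (\<mu> i) (f i)"
    and lipg: "\<forall>i. lipschitz_on (Lc i) UNIV (g i)"
    and xstar_min: "\<forall>z. (\<Sum>i\<in>UNIV. f i xstar) \<le> (\<Sum>i\<in>UNIV. f i z)"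
    and u_min: "\<forall>i z. f i (u i) \<le> f i z"
    and iter: "near_dgd_iter W t \<alpha> g s0 x y"
    and alpha_pos: "0 < \<alpha>"
    and alpha_le: "\<alpha> \<le> min (1 / Max (range Lc))
                      (2 / ((\<Sum>i\<in>UNIV. \<mu> i) / real CARD('n) + (\<Sum>i\<in>UNIV. Lc i) / real CARD('n)))"
    and alpha_c2: "\<alpha> * (2 * ((\<Sum>i\<in>UNIV. \<mu> i) / real CARD('n)) * ((\<Sum>i\<in>UNIV. Lc i) / real CARD('n))
                     / ((\<Sum>i\<in>UNIV. \<mu> i) / real CARD('n) + (\<Sum>i\<in>UNIV. Lc i) / real CARD('n))) < 1"
  shows "let \<beta> = second_eig_mag W;
             L = Max (range Lc);
             mubar = (\<Sum>i\<in>UNIV. \<mu> i) / real CARD('n);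
             Lbar = (\<Sum>i\<in>UNIV. Lc i) / real CARD('n);
             c2 = 2 * mubar * Lbar / (mubar + Lbar);
             \<nu> = 2 * \<alpha> * Min (range (\<lambda>i. \<mu> i * Lc i / (\<mu> i + Lc i)));
             D = sqrt (\<Sum>i\<in>UNIV. (norm (s0 - u i))\<^sup>2)
                 + (\<nu> + 4) / \<nu> * sqrt (\<Sum>i\<in>UNIV. (norm (u i))\<^sup>2);
             \<delta> = c2 / (2 * (1 - \<alpha> * c2));
             c1 = sqrt (1 - \<alpha> * c2 / 2);
             c3 = sqrt (\<alpha> * (\<alpha> + 1 / \<delta>)) * D * L
         in \<forall>k i.
              norm (x k i - xstar) \<le> c1 ^ k * norm (s0 - xstar) + c3 / sqrt (1 - c1\<^sup>2) * \<beta> ^ t + \<beta> ^ t * D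
            \<and> norm (y k i - xstar) \<le> c1 ^ k * norm (s0 - xstar) + c3 / sqrt (1 - c1\<^sup>2) * \<beta> ^ t + \<beta> ^ t * D + 2 * D"
proof -
  interpret near_dgd W f g \<mu> Lc t \<alpha> s0 xstar u x y
    using W_sym W_nonneg W_rows W_cols W_eig1 beta_pos mu_pos L_pos grad sconv lipg xstar_min u_min
      iter alpha_pos alpha_le alpha_c2
    by unfold_locales (auto simp: doubly_stochastic_def mean_real)
  show ?thesis
    unfolding Let_def using x_error_le y_error_le
    by (simp add: L_def c2_def \<nu>_def D_def \<delta>_def c1_def c3_def mean_real stack_norm_def L2_set_def)
qed

end
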